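(* Let $M$ be a matroid of rank $r$ on a finite linearly ordered set $E$ and let $0\le k\le r-1$. Every $V\in\mathcal V_k$ is a circuit of $M$.
   Context: Graded lexicographic order on $2^E$: $X\prec Y$ if $|X|<|Y|$, or $|X|=|Y|$ and $\min(X\triangle Y)\in X$; $\min\mathcal X$ is the $\prec$-smallest member. $X$ is $k$-closed in $M$ if $\mathrm{cl}_M(Y)\subseteq X$ for all $Y\subseteq X$ with $|Y|\le k$; $\mathrm{cl}_k(X)$ is the intersection of all $k$-closed supersets of $X$ (so $\mathrm{cl}_{-1}(X)=X$). For a flat $F$ of rank $k$, $U^*_F=\min\{U:\mathrm{cl}_{k-1}(U)=F\}$, and $\mathcal U^*_k=\{U^*_F: F\text{ a flat of rank }k,\ |U^*_F|>k\}$. A subset $V\subseteq U$ is consecutive in $U$ if there are no $e,g\in V$ and $f\in U\setminus V$ with $e<f<g$. For $U\in\mathcal U^*_k$, $\mathcal V(U)$ is the set of $(k+1)$-subsets of $U$ that are consecutive in $U$, and $\mathcal V_k=\bigcup_{U\in\mathcal U^*_k}\mathcal V(U)$. *)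

theory Defs
  imports Main
begin

definition matroid :: "'a set \<Rightarrow> ('a set \<Rightarrow> bool) \<Rightarrow> bool" where
  "matroid E indep \<longleftrightarrow>
     finite E \<and>
     indep {} \<and>
     (\<forall>X. indep X \<longrightarrow> X \<subseteq> E) \<and>
     (\<forall>X Y. indep Y \<and> X \<subseteq> Y \<longrightarrow> indep X) \<and>
     (\<forall>X Y. indep X \<and> indep Y \<and> card X < card Y \<longrightarrow> (\<exists>e\<in>Y - X. indep (insert e X)))"

definition mrank :: "('a set \<Rightarrow> bool) \<Rightarrow> 'a set \<Rightarrow> nat" where
  "mrank indep X = Max (card ` {I. I \<subseteq> X \<and> indep I})"

definition mcl :: "'a set \<Rightarrow> ('a set \<Rightarrow> bool) \<Rightarrow> 'a set \<Rightarrow> 'a set" where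
  "mcl E indep X = {e \<in> E. mrank indep (insert e X) = mrank indep X}"

definition circuit :: "'a set \<Rightarrow> ('a set \<Rightarrow> bool) \<Rightarrow> 'a set \<Rightarrow> bool" where
  "circuit E indep C \<longleftrightarrow> C \<subseteq> E \<and> \<not> indep C \<and> (\<forall>x\<in>C. indep (C - {x}))"

definition flat :: "'a set \<Rightarrow> ('a set \<Rightarrow> bool) \<Rightarrow> 'a set \<Rightarrow> bool" where
  "flat E indep F \<longleftrightarrow> F \<subseteq> E \<and> mcl E indep F = F"

section \<open>k-closed sets and the k-closure (k may be -1)\<close>

definition kclosed :: "'a set \<Rightarrow> ('a set \<Rightarrow> bool) \<Rightarrow> int \<Rightarrow> 'a set \<Rightarrow> bool" where
  "kclosed E indep k X \<longleftrightarrow>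
     (\<forall>Y. Y \<subseteq> X \<and> int (card Y) \<le> k \<longrightarrow> mcl E indep Y \<subseteq> X)"

definition kcl :: "'a set \<Rightarrow> ('a set \<Rightarrow> bool) \<Rightarrow> int \<Rightarrow> 'a set \<Rightarrow> 'a set" where
  "kcl E indep k X = \<Inter> {Z. Z \<subseteq> E \<and> X \<subseteq> Z \<and> kclosed E indep k Z}"

definition glex_less :: "'a::linorder set \<Rightarrow> 'a set \<Rightarrow> bool" where
  "glex_less X Y \<longleftrightarrow>
     card X < card Y \<or> (card X = card Y \<and> X \<noteq> Y \<and> Min ((X - Y) \<union> (Y - X)) \<in> X)"

definition glex_min :: "'a::linorder set set \<Rightarrow> 'a set" where
  "glex_min \<X> = (THE U. U \<in> \<X> \<and> (\<forall>W\<in>\<X>. W \<noteq> U \<longrightarrow> glex_less U W))"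

definition Ustar :: "'a::linorder set \<Rightarrow> ('a set \<Rightarrow> bool) \<Rightarrow> nat \<Rightarrow> 'a set \<Rightarrow> 'a set" where
  "Ustar E indep k F = glex_min {U. U \<subseteq> E \<and> kcl E indep (int k - 1) U = F}"

definition Ustar_family :: "'a::linorder set \<Rightarrow> ('a set \<Rightarrow> bool) \<Rightarrow> nat \<Rightarrow> 'a set set" where
  "Ustar_family E indep k =
     {Ustar E indep k F | F. flat E indep F \<and> mrank indep F = k \<and> card (Ustar E indep k F) > k}"

definition consecutive :: "'a::linorder set \<Rightarrow> 'a set \<Rightarrow> bool" where
  "consecutive V U \<longleftrightarrow> V \<subseteq> U \<and>
     \<not> (\<exists>e\<in>V. \<exists>g\<in>V. \<exists>f\<in>U - V. e < f \<and> f < g)"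

definition Vsets :: "nat \<Rightarrow> 'a::linorder set \<Rightarrow> 'a set set" where
  "Vsets k U = {V. V \<subseteq> U \<and> card V = k + 1 \<and> consecutive V U}"

definition Vfamily :: "'a::linorder set \<Rightarrow> ('a set \<Rightarrow> bool) \<Rightarrow> nat \<Rightarrow> 'a set set" where
  "Vfamily E indep k = (\<Union>U\<in>Ustar_family E indep k. Vsets k U)"

end

theory Submission
  imports Defs
begin

text \<open>
  Let \<open>F\<close> be a flat of rank \<open>k\<close> and \<open>U = U\<^sup>*\<^sub>F\<close>. Since \<open>U \<subseteq> F\<close>, any \<open>k + 1\<close> elements of \<open>U\<close>
  are dependent. Conversely, if some \<open>W \<subseteq> U\<close> with \<open>|W| \<le> k\<close> were dependent, some \<open>e \<in> W\<close>
  would lie in the closure of \<open>W - {e}\<close>, a set of size at most \<open>k - 1\<close>; then \<open>U - {e}\<close> has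
  the same \<open>(k - 1)\<close>-closure \<open>F\<close> as \<open>U\<close> and is smaller, contradicting the minimality of
  \<open>U\<close>. Hence every \<open>(k + 1)\<close>-subset of \<open>U\<close> is a circuit, consecutive or not.
\<close>

section \<open>The graded lexicographic order\<close>

lemma glex_less_card_le: "glex_less X Y \<Longrightarrow> card X \<le> card Y"
  unfolding glex_less_def by auto

lemma glex_less_asym:
  assumes "finite X" "finite Y" "glex_less X Y"
  shows "\<not> glex_less Y X"
proof
  assume yx: "glex_less Y X"
  let ?D = "(X - Y) \<union> (Y - X)"
  have "card X = card Y" "X \<noteq> Y" using assms(3) yx unfolding glex_less_def by auto
  then have "Min ?D \<in> ?D" using assms by (intro Min_in) auto
  moreover have "Min ?D \<in> X" "Min ?D \<in> Y"
    using assms(3) yx \<open>card X = card Y\<close> unfolding glex_less_def by (auto simp: Un_commute)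
  ultimately show False by auto
qed

lemma glex_less_total:
  fixes X Y :: "'a::linorder set"
  assumes "finite X" "finite Y" "X \<noteq> Y"
  shows "glex_less X Y \<or> glex_less Y X"
proof -
  let ?D = "(X - Y) \<union> (Y - X)"
  have "Min ?D \<in> ?D" using assms by (intro Min_in) auto
  then show ?thesis unfolding glex_less_def using assms by (auto simp: Un_commute)
qed

lemma glex_less_trans:
  fixes X Y Z :: "'a::linorder set"
  assumes fin: "finite X" "finite Y" "finite Z"
    and xy: "glex_less X Y" and yz: "glex_less Y Z"
  shows "glex_less X Z"
proof (cases "card X = card Y \<and> card Y = card Z")
  case False
  then have "card X < card Z"
    using glex_less_card_le[OF xy] glex_less_card_le[OF yz] by linarith
  then show ?thesis by (simp add: glex_less_def)
next
  case True
  define A where "A = (X - Y) \<union> (Y - X)"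
  define B where "B = (Y - Z) \<union> (Z - Y)"
  define D where "D = (X - Z) \<union> (Z - X)"
  have fin_ABD: "finite A" "finite B" "finite D" using fin by (auto simp: A_def B_def D_def)
  have "A \<noteq> {}" "B \<noteq> {}" using xy yz True unfolding glex_less_def A_def B_def by auto
  define a where "a = Min A"
  define b where "b = Min B"
  have a: "a \<in> A" "a \<in> X" "\<And>d. d \<in> A \<Longrightarrow> a \<le> d"
    using Min_in[OF fin_ABD(1) \<open>A \<noteq> {}\<close>] xy True fin_ABD(1)
    unfolding a_def glex_less_def A_def by auto
  have b: "b \<in> B" "b \<in> Y" "\<And>d. d \<in> B \<Longrightarrow> b \<le> d"
    using Min_in[OF fin_ABD(2) \<open>B \<noteq> {}\<close>] yz True fin_ABD(2)
    unfolding b_def glex_less_def B_def by auto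
  \<comment> \<open>\<open>X\<close> and \<open>Z\<close> agree below \<open>min a b\<close>, and \<open>min a b\<close> lies in \<open>X - Z\<close>.\<close>
  have below: "d \<notin> D" if "d < min a b" for d
  proof -
    have "d < a" "d < b" using that by simp_all
    then have "d \<notin> A" "d \<notin> B" using a(3) b(3) leD by blast+
    then show ?thesis unfolding A_def B_def D_def by blast
  qed
  have mid: "min a b \<in> D \<and> min a b \<in> X"
  proof (cases a b rule: linorder_cases)
    case less
    then have "a \<notin> B" using b(3) by (meson not_le)
    then show ?thesis using a less unfolding A_def B_def D_def by auto
  next
    case equal
    then show ?thesis using a b unfolding A_def by auto
  next
    case greater
    then have "b \<notin> A" using a(3) by (meson not_le)
    then show ?thesis using b greater unfolding A_def B_def D_def by auto
  qed
  have "Min D = min a b"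
    using mid below by (intro Min_eqI[OF fin_ABD(3)]) (auto intro: leI)
  then show ?thesis using mid True unfolding glex_less_def D_def by auto
qed

lemma glex_least_exists:
  fixes \<X> :: "'a::linorder set set"
  assumes "finite \<X>" "\<X> \<noteq> {}" "\<forall>X\<in>\<X>. finite X"
  shows "\<exists>U\<in>\<X>. \<forall>W\<in>\<X>. W \<noteq> U \<longrightarrow> glex_less U W"
  using assms
proof (induction \<X> rule: finite_ne_induct)
  case (singleton X)
  then show ?case by auto
next
  case (insert X \<F>)
  then obtain M where M: "M \<in> \<F>" "\<forall>W\<in>\<F>. W \<noteq> M \<longrightarrow> glex_less M W" by auto
  have fin: "finite X" "finite M" using insert.prems M(1) by auto
  show ?case
  proof (cases "glex_less X M")
    case True
    have "glex_less X W" if "W \<in> \<F>" for W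
    proof (cases "W = M")
      case False
      then have "glex_less M W" using M(2) that by blast
      then show ?thesis using glex_less_trans fin True that insert.prems by blast
    qed (use True in simp)
    then show ?thesis by auto
  next
    case False
    then have "glex_less M X" using glex_less_total[OF fin] insert.hyps M(1) by auto
    then show ?thesis using M by auto
  qed
qed

lemma glex_min_least:
  fixes \<X> :: "'a::linorder set set"
  assumes "finite \<X>" "\<X> \<noteq> {}" "\<forall>X\<in>\<X>. finite X"
  shows "glex_min \<X> \<in> \<X>" "\<forall>W\<in>\<X>. W \<noteq> glex_min \<X> \<longrightarrow> glex_less (glex_min \<X>) W"
proof -
  let ?least = "\<lambda>U. U \<in> \<X> \<and> (\<forall>W\<in>\<X>. W \<noteq> U \<longrightarrow> glex_less U W)"
  have "\<exists>!U. ?least U"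
  proof (rule ex_ex1I)
    show "\<exists>U. ?least U" using glex_least_exists[OF assms] by blast
    show "U = U'" if "?least U" "?least U'" for U U'
    proof (rule ccontr)
      assume "U \<noteq> U'"
      then have "glex_less U U'" "glex_less U' U" using that by auto
      moreover have "finite U" "finite U'" using that assms(3) by auto
      ultimately show False using glex_less_asym by blast
    qed
  qed
  then have "?least (glex_min \<X>)" unfolding glex_min_def by (rule theI')
  then show "glex_min \<X> \<in> \<X>" "\<forall>W\<in>\<X>. W \<noteq> glex_min \<X> \<longrightarrow> glex_less (glex_min \<X>) W"
    by simp_all
qed

section \<open>Rank, closure and \<open>k\<close>-closure\<close>

locale finite_matroid =
  fixes E :: "'a set" and indep :: "'a set \<Rightarrow> bool"
  assumes matroid: "matroid E indep"
begin

lemma finite_E: "finite E"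
  using matroid unfolding matroid_def by auto

lemma indep_subset_E: "indep X \<Longrightarrow> X \<subseteq> E"
  using matroid unfolding matroid_def by auto

lemma indep_subset: "indep Y \<Longrightarrow> X \<subseteq> Y \<Longrightarrow> indep X"
  using matroid unfolding matroid_def by blast

lemma indep_empty: "indep {}"
  using matroid unfolding matroid_def by auto

lemma indep_augment: "indep X \<Longrightarrow> indep Y \<Longrightarrow> card X < card Y \<Longrightarrow> \<exists>e\<in>Y - X. indep (insert e X)"
  using matroid unfolding matroid_def by blast

lemma finite_indep: "indep X \<Longrightarrow> finite X"
  using indep_subset_E finite_E finite_subset by blast

lemma indep_extend:
  assumes "indep I" "indep K" "card I \<le> card K"
  shows "\<exists>J. indep J \<and> I \<subseteq> J \<and> J \<subseteq> I \<union> K \<and> card J = card K"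
  using assms
proof (induction "card K - card I" arbitrary: I)
  case 0
  then show ?case by auto
next
  case (Suc n)
  then have "card I < card K" by simp
  then obtain e where e: "e \<in> K - I" "indep (insert e I)"
    using indep_augment Suc.prems by blast
  have "card (insert e I) = Suc (card I)" using e finite_indep[OF Suc.prems(1)] by auto
  then have "n = card K - card (insert e I)" "card (insert e I) \<le> card K"
    using Suc.hyps(2) \<open>card I < card K\<close> by simp_all
  then obtain J where "indep J" "insert e I \<subseteq> J" "J \<subseteq> insert e I \<union> K" "card J = card K"
    using Suc.hyps(1) e(2) Suc.prems(2) by blast
  then show ?case using e by (intro exI[of _ J]) auto
qed

lemma finite_indep_cards: "finite (card ` {I. I \<subseteq> X \<and> indep I})"
proof -
  have "{I. I \<subseteq> X \<and> indep I} \<subseteq> Pow E" using indep_subset_E by auto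
  then show ?thesis using finite_E by (meson finite_Pow_iff finite_imageI finite_subset)
qed

lemma card_le_mrank: "I \<subseteq> X \<Longrightarrow> indep I \<Longrightarrow> card I \<le> mrank indep X"
  unfolding mrank_def using finite_indep_cards by (intro Max_ge) auto

lemma obtain_max_indep:
  obtains I where "I \<subseteq> X" "indep I" "card I = mrank indep X"
proof -
  have "card ` {I. I \<subseteq> X \<and> indep I} \<noteq> {}" using indep_empty by auto
  from Max_in[OF finite_indep_cards this] show ?thesis
    using that unfolding mrank_def by auto
qed

lemma mrank_mono: "X \<subseteq> Y \<Longrightarrow> mrank indep X \<le> mrank indep Y"
  by (metis card_le_mrank obtain_max_indep order_trans)

lemma dependent_obtains_closure_point:
  assumes "\<not> indep W" "W \<subseteq> E"
  obtains e where "e \<in> W" "e \<in> mcl E indep (W - {e})"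
proof -
  obtain I where I: "I \<subseteq> W" "indep I" "card I = mrank indep W" by (rule obtain_max_indep)
  moreover have "I \<noteq> W" using I(2) assms(1) by blast
  ultimately obtain e where e: "e \<in> W" "e \<notin> I" by blast
  then have "mrank indep W \<le> mrank indep (W - {e})"
    using card_le_mrank[OF _ I(2)] I by (simp add: subset_Diff_insert)
  moreover have "mrank indep (W - {e}) \<le> mrank indep W" by (rule mrank_mono) auto
  moreover have "insert e (W - {e}) = W" using e by auto
  ultimately show ?thesis using that e assms(2) unfolding mcl_def by auto
qed

lemma mcl_mono:
  assumes "Y \<subseteq> F"
  shows "mcl E indep Y \<subseteq> mcl E indep F"
proof
  \<comment> \<open>Extending a basis of \<open>Y\<close> to a basis of \<open>insert e F\<close> must add \<open>e\<close>, so \<open>e\<close> raises the rank of \<open>Y\<close>.\<close>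
  fix e assume e: "e \<in> mcl E indep Y"
  show "e \<in> mcl E indep F"
  proof (rule ccontr)
    assume "e \<notin> mcl E indep F"
    then have gt: "mrank indep F < mrank indep (insert e F)"
      using e mrank_mono[of F "insert e F"] unfolding mcl_def by fastforce
    obtain K where K: "K \<subseteq> insert e F" "indep K" "card K = mrank indep (insert e F)"
      by (rule obtain_max_indep)
    obtain I where I: "I \<subseteq> Y" "indep I" "card I = mrank indep Y" by (rule obtain_max_indep)
    have "card I \<le> card K" using I K mrank_mono[of Y "insert e F"] assms by auto
    then obtain J where J: "indep J" "I \<subseteq> J" "J \<subseteq> I \<union> K" "card J = card K"
      using indep_extend I K by blast
    have "\<not> J \<subseteq> F"
    proof
      assume "J \<subseteq> F"
      then have "card J \<le> mrank indep F" using card_le_mrank J(1) by blast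
      then show False using J(4) K(3) gt by linarith
    qed
    then have "e \<in> J" "e \<notin> I" using J(3) K(1) I(1) assms by auto
    then have "indep (insert e I)" using indep_subset[OF J(1)] J(2) by auto
    then have "Suc (mrank indep Y) \<le> mrank indep (insert e Y)"
      using card_le_mrank[of "insert e I" "insert e Y"] I \<open>e \<notin> I\<close> finite_indep by auto
    then show False using e unfolding mcl_def by auto
  qed
qed

lemma kclosed_E: "kclosed E indep k E"
  unfolding kclosed_def mcl_def by auto

lemma kcl_subset_E: "X \<subseteq> E \<Longrightarrow> kcl E indep k X \<subseteq> E"
  unfolding kcl_def using kclosed_E by auto

lemma kcl_superset: "X \<subseteq> kcl E indep k X"
  unfolding kcl_def by auto

lemma kcl_mono: "X \<subseteq> Y \<Longrightarrow> kcl E indep k X \<subseteq> kcl E indep k Y"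
  unfolding kcl_def by auto

lemma kclosed_kcl: "kclosed E indep k (kcl E indep k X)"
  unfolding kclosed_def kcl_def by (auto simp: kclosed_def) blast

lemma kcl_least: "X \<subseteq> Z \<Longrightarrow> Z \<subseteq> E \<Longrightarrow> kclosed E indep k Z \<Longrightarrow> kcl E indep k X \<subseteq> Z"
  unfolding kcl_def by auto

lemma mcl_subset_kcl:
  "Y \<subseteq> kcl E indep k X \<Longrightarrow> int (card Y) \<le> k \<Longrightarrow> mcl E indep Y \<subseteq> kcl E indep k X"
  using kclosed_kcl unfolding kclosed_def by blast

lemma kcl_flat: "flat E indep F \<Longrightarrow> kcl E indep k F = F"
  using kcl_least[of F F k] kcl_superset[of F k] mcl_mono
  unfolding flat_def kclosed_def by blast

lemma kcl_Diff_closure_point: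
  assumes "U \<subseteq> E" "W \<subseteq> U - {e}" "int (card W) \<le> k" "e \<in> mcl E indep W"
  shows "kcl E indep k (U - {e}) = kcl E indep k U"
proof
  show "kcl E indep k (U - {e}) \<subseteq> kcl E indep k U" by (rule kcl_mono) blast
  have "e \<in> kcl E indep k (U - {e})"
    using mcl_subset_kcl[OF _ assms(3)] kcl_superset[of "U - {e}" k] assms(2,4) by blast
  then have "U \<subseteq> kcl E indep k (U - {e})" using kcl_superset[of "U - {e}" k] by blast
  moreover have "kcl E indep k (U - {e}) \<subseteq> E" using assms(1) by (intro kcl_subset_E) blast
  ultimately show "kcl E indep k U \<subseteq> kcl E indep k (U - {e})"
    using kcl_least kclosed_kcl by blast
qed

lemma indep_if_kcl_irredundant:
  assumes "U \<subseteq> E" "\<And>e. e \<in> U \<Longrightarrow> kcl E indep j (U - {e}) \<noteq> kcl E indep j U"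
    and "W \<subseteq> U" "int (card W) \<le> j + 1"
  shows "indep W"
proof (rule ccontr)
  assume "\<not> indep W"
  moreover have "W \<subseteq> E" using assms(3,1) by (rule order_trans)
  ultimately obtain e where e: "e \<in> W" "e \<in> mcl E indep (W - {e})"
    by (rule dependent_obtains_closure_point)
  have "finite W" using \<open>W \<subseteq> E\<close> finite_E by (rule finite_subset)
  then have "card (W - {e}) = card W - 1" using e(1) by simp
  moreover have "card W \<ge> 1" using \<open>finite W\<close> e(1) by (auto simp: Suc_le_eq card_gt_0_iff)
  ultimately have "int (card (W - {e})) \<le> j" using assms(4) by linarith
  moreover have "W - {e} \<subseteq> U - {e}" using assms(3) by blast
  ultimately have "kcl E indep j (U - {e}) = kcl E indep j U"
    using kcl_Diff_closure_point[OF assms(1)] e(2) by blast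
  then show False using assms(2,3) e(1) by blast
qed

end

section \<open>Circuits from the minimal generators \<open>U\<^sup>*\<^sub>F\<close>\<close>

locale ordered_matroid = finite_matroid E indep for E :: "'a::linorder set" and indep
begin

lemma Ustar_properties:
  fixes k :: nat
  assumes "flat E indep F"
  defines "U \<equiv> Ustar E indep k F"
  shows "U \<subseteq> E" "kcl E indep (int k - 1) U = F"
    and "\<And>e. e \<in> U \<Longrightarrow> kcl E indep (int k - 1) (U - {e}) \<noteq> kcl E indep (int k - 1) U"
proof -
  define \<X> where "\<X> = {U. U \<subseteq> E \<and> kcl E indep (int k - 1) U = F}"
  have "F \<subseteq> E" using assms(1) unfolding flat_def by blast
  then have "\<X> \<noteq> {}" using kcl_flat[OF assms(1)] unfolding \<X>_def by blast
  have "\<X> \<subseteq> Pow E" unfolding \<X>_def by blast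
  then have "finite \<X>" using finite_E by (meson finite_Pow_iff finite_subset)
  have fin: "\<forall>X\<in>\<X>. finite X"
    using finite_subset[OF _ finite_E] unfolding \<X>_def by blast
  have "U = glex_min \<X>" unfolding U_def Ustar_def \<X>_def ..
  then have U: "U \<in> \<X>" "\<forall>W\<in>\<X>. W \<noteq> U \<longrightarrow> glex_less U W"
    using glex_min_least[OF \<open>finite \<X>\<close> \<open>\<X> \<noteq> {}\<close> fin] by simp_all
  then show "U \<subseteq> E" "kcl E indep (int k - 1) U = F" unfolding \<X>_def by auto
  show "kcl E indep (int k - 1) (U - {e}) \<noteq> kcl E indep (int k - 1) U" if "e \<in> U" for e
  proof
    assume "kcl E indep (int k - 1) (U - {e}) = kcl E indep (int k - 1) U"
    then have "U - {e} \<in> \<X>" using U(1) unfolding \<X>_def by auto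
    then have "glex_less U (U - {e})" using U(2) that by auto
    then have "card U \<le> card (U - {e})" by (rule glex_less_card_le)
    moreover have "card (U - {e}) < card U"
      using card_Diff1_less[OF bspec[OF fin U(1)] that] .
    ultimately show False by linarith
  qed
qed

lemma circuit_if_subset_Ustar:
  assumes "flat E indep F" "mrank indep F = k"
    and "V \<subseteq> Ustar E indep k F" "card V = k + 1"
  shows "circuit E indep V"
proof -
  let ?U = "Ustar E indep k F"
  note U = Ustar_properties[OF assms(1), where k = k]
  have "V \<subseteq> F" using assms(3) U(2) kcl_superset by blast
  have "\<not> indep V"
  proof
    assume "indep V"
    then have "card V \<le> mrank indep F" using \<open>V \<subseteq> F\<close> by (rule card_le_mrank[rotated])
    then show False using assms(2,4) by simp
  qed
  moreover have "indep (V - {x})" if "x \<in> V" for x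
  proof (rule indep_if_kcl_irredundant[OF U(1) U(3)])
    show "V - {x} \<subseteq> ?U" using assms(3) by blast
    have "finite V" using assms(4) by (simp add: card_ge_0_finite)
    then show "int (card (V - {x})) \<le> int k - 1 + 1" using that assms(4) by simp
  qed
  moreover have "V \<subseteq> E" using assms(3) U(1) by blast
  ultimately show ?thesis unfolding circuit_def by blast
qed

end

theorem lemma5p6:
  fixes E :: "'a::linorder set" and indep :: "'a set \<Rightarrow> bool" and r k :: nat
  assumes "matroid E indep"
    and "mrank indep E = r"
    and "k + 1 \<le> r"
    and "V \<in> Vfamily E indep k"
  shows "circuit E indep V"
proof -
  interpret ordered_matroid E indep using assms(1) by unfold_locales
  obtain U where "U \<in> Ustar_family E indep k" "V \<in> Vsets k U"
    using assms(4) unfolding Vfamily_def by blast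
  then obtain F where "flat E indep F" "mrank indep F = k" "V \<in> Vsets k (Ustar E indep k F)"
    unfolding Ustar_family_def by blast
  then show ?thesis using circuit_if_subset_Ustar unfolding Vsets_def by blast
qed

end
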